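(* Let $\mathfrak L$ be a GNN layer of input dimension $p$. Then there is a $\lambda\in\mathbb N_{>0}$ such that for all graphs $G$, all signals $\mathcal x,\mathcal x':V(G)\to\mathbb R^p$, and all vertices $v\in V(G)$, $$\|\tilde{\mathfrak L}(G,\mathcal x)(v)-\tilde{\mathfrak L}(G,\mathcal x')(v)\|_\infty\le\lambda\,\|\mathcal x|_{N[v]}-\mathcal x'|_{N[v]}\|_\infty\max\{\deg(v),1\}\le\lambda\,\|\mathcal x-\mathcal x'\|_\infty|G|.$$
   Context: Graphs are finite, simple, undirected with nonempty vertex set; $N(v)$ is the neighbourhood, $N[v]=N(v)\cup\{v\}$, $\deg(v)=|N(v)|$, $|G|=|V(G)|$. For a signal $\mathcal y$ and $W\subseteq V(G)$, $\|\mathcal y|_W\|_\infty=\max_{w\in W}\|\mathcal y(w)\|_\infty$, and $\|\mathcal y\|_\infty=\|\mathcal y|_{V(G)}\|_\infty$. An FNN has a finite dag skeleton, Lipschitz continuous activation functions $\mathfrak a_v$, real weights and biases; sources are inputs, sinks outputs, a non-input node computes $\mathfrak a_v(b_v+\sum_{uv\in E}w_{uv}\cdot\text{value}(u))$. A GNN layer $\mathfrak L=(\mathrm{msg},\mathrm{agg},\mathrm{comb})$ of input dimension $p$ has $\mathrm{msg}:\mathbb R^{2p}\to\mathbb R^r$, $\mathrm{comb}:\mathbb R^{p+r}\to\mathbb R^q$ computed by FNNs and $\mathrm{agg}$ coordinatewise sum, mean or maximum of finite multisets (value $\mathbf 0$ on the empty multiset); $\tilde{\mathfrak L}(G,\mathcal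 x)(v)=\mathrm{comb}\big(\mathcal x(v),\mathrm{agg}\{\!\{\mathrm{msg}(\mathcal x(v),\mathcal x(w)):w\in N(v)\}\!\}\big)$. *)

theory Defs
  imports "HOL-Analysis.Analysis" "HOL-Library.Multiset"
begin

text \<open>An FNN skeleton is a finite dag whose nodes are numbered 0..<fnn_nodes in a
topological order (every edge u -> v has u < v); the input nodes are 0..<fnn_in
(in this order = order of the input coordinates), the outputs are listed in fnn_outs
(order = order of the output coordinates).\<close>

record fnn =
  fnn_in    :: nat
  fnn_nodes :: nat
  fnn_outs  :: "nat list"
  fnn_edge  :: "nat \<Rightarrow> nat \<Rightarrow> bool"
  fnn_wt    :: "nat \<Rightarrow> nat \<Rightarrow> real"
  fnn_bias  :: "nat \<Rightarrow> real"
  fnn_act   :: "nat \<Rightarrow> real \<Rightarrow> real"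

definition wf_fnn :: "fnn \<Rightarrow> bool" where
  "wf_fnn N \<longleftrightarrow>
     fnn_in N \<le> fnn_nodes N \<and>
     (\<forall>u v. fnn_edge N u v \<longrightarrow> u < v \<and> v < fnn_nodes N) \<and>
     (\<forall>v < fnn_nodes N. (\<not> (\<exists>u. fnn_edge N u v)) \<longleftrightarrow> v < fnn_in N) \<and>
     distinct (fnn_outs N) \<and>
     set (fnn_outs N) = {v. v < fnn_nodes N \<and> \<not> (\<exists>w. fnn_edge N v w)} \<and>
     (\<forall>v. fnn_in N \<le> v \<and> v < fnn_nodes N \<longrightarrow>
        (\<exists>C. C-lipschitz_on UNIV (fnn_act N v)))"

function fnn_val :: "fnn \<Rightarrow> (nat \<Rightarrow> real) \<Rightarrow> nat \<Rightarrow> real" where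
  "fnn_val N x v =
     (if v < fnn_in N then x v
      else fnn_act N v (fnn_bias N v +
             (\<Sum>u\<in>{..<v}. if fnn_edge N u v then fnn_wt N u v * fnn_val N x u else 0)))"
  by auto
termination by (relation "Wellfounded.measure (\<lambda>(N, x, v). v)") auto

definition fnn_eval :: "fnn \<Rightarrow> real list \<Rightarrow> real list" where
  "fnn_eval N xs = map (fnn_val N (\<lambda>i. xs ! i)) (fnn_outs N)"

definition linf :: "real list \<Rightarrow> real" where
  "linf xs = Max (insert 0 (abs ` set xs))"

definition vsub :: "real list \<Rightarrow> real list \<Rightarrow> real list" where
  "vsub xs ys = map2 (-) xs ys"

definition sig_dist :: "'v set \<Rightarrow> ('v \<Rightarrow> real list) \<Rightarrow> ('v \<Rightarrow> real list) \<Rightarrow> real" where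
  "sig_dist W x x' = Max (insert 0 ((\<lambda>w. linf (vsub (x w) (x' w))) ` W))"

definition graph :: "'v set \<Rightarrow> ('v \<Rightarrow> 'v \<Rightarrow> bool) \<Rightarrow> bool" where
  "graph V E \<longleftrightarrow> finite V \<and> V \<noteq> {} \<and> (\<forall>u v. E u v \<longrightarrow> u \<in> V \<and> v \<in> V) \<and>
     (\<forall>u v. E u v \<longrightarrow> E v u) \<and> (\<forall>u. \<not> E u u)"

definition nbrs :: "'v set \<Rightarrow> ('v \<Rightarrow> 'v \<Rightarrow> bool) \<Rightarrow> 'v \<Rightarrow> 'v set" where
  "nbrs V E v = {w \<in> V. E v w}"

definition cnbrs :: "'v set \<Rightarrow> ('v \<Rightarrow> 'v \<Rightarrow> bool) \<Rightarrow> 'v \<Rightarrow> 'v set" where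
  "cnbrs V E v = insert v (nbrs V E v)"

definition deg :: "'v set \<Rightarrow> ('v \<Rightarrow> 'v \<Rightarrow> bool) \<Rightarrow> 'v \<Rightarrow> nat" where
  "deg V E v = card (nbrs V E v)"

definition signal :: "'v set \<Rightarrow> nat \<Rightarrow> ('v \<Rightarrow> real list) \<Rightarrow> bool" where
  "signal V p x \<longleftrightarrow> (\<forall>v\<in>V. length (x v) = p)"

datatype agg_kind = AggSum | AggMean | AggMax

definition agg_apply :: "agg_kind \<Rightarrow> nat \<Rightarrow> real list multiset \<Rightarrow> real list" where
  "agg_apply a r M =
     (if M = {#} then replicate r 0
      else map (\<lambda>i. let C = image_mset (\<lambda>y. y ! i) M in
                 (case a of AggSum \<Rightarrow> sum_mset C
                          | AggMean \<Rightarrow> sum_mset C / real (size C)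
                          | AggMax \<Rightarrow> Max (set_mset C))) [0..<r])"

record gnn_layer =
  gl_msg  :: fnn
  gl_agg  :: agg_kind
  gl_comb :: fnn

definition gl_r :: "gnn_layer \<Rightarrow> nat" where
  "gl_r L = length (fnn_outs (gl_msg L))"

definition gnn_layer_wf :: "nat \<Rightarrow> gnn_layer \<Rightarrow> bool" where
  "gnn_layer_wf p L \<longleftrightarrow> wf_fnn (gl_msg L) \<and> wf_fnn (gl_comb L) \<and>
     fnn_in (gl_msg L) = 2 * p \<and> fnn_in (gl_comb L) = p + gl_r L"

definition layer_apply ::
  "gnn_layer \<Rightarrow> 'v set \<Rightarrow> ('v \<Rightarrow> 'v \<Rightarrow> bool) \<Rightarrow> ('v \<Rightarrow> real list) \<Rightarrow> 'v \<Rightarrow> real list" where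
  "layer_apply L V E x v =
     fnn_eval (gl_comb L)
       (x v @ agg_apply (gl_agg L) (gl_r L)
                (image_mset (\<lambda>w. fnn_eval (gl_msg L) (x v @ x w)) (mset_set (nbrs V E v))))"

end

theory Submission
  imports Defs
begin

(* A feedforward network is Lipschitz for the sup norm: along a topological order, each node
   applies a Lipschitz activation to a weighted sum of earlier nodes.  Aggregating the deg(v)
   messages of v multiplies their Lipschitz constant by at most deg(v) (sum) or not at all
   (mean, max).  Composing message network, aggregation and combination network gives the
   local bound; N[v] \<subseteq> V and max{deg(v), 1} \<le> |G| give the global one. *)

declare fnn_val.simps [simp del]

lemma linf_nonneg: "0 \<le> linf xs"
  unfolding linf_def by (simp add: Max_ge_iff)

lemma linf_le_iff: "linf xs \<le> d \<longleftrightarrow> 0 \<le> d \<and> (\<forall>y\<in>set xs. \<bar>y\<bar> \<le> d)"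
  unfolding linf_def by (auto simp: Max_le_iff)

lemma linf_vsub_le_iff:
  assumes "length xs = length ys"
  shows "linf (vsub xs ys) \<le> d \<longleftrightarrow> 0 \<le> d \<and> (\<forall>i<length xs. \<bar>xs ! i - ys ! i\<bar> \<le> d)"
  using assms unfolding linf_le_iff vsub_def by (auto simp: set_zip)

lemma abs_nth_diff_le_linf_vsub:
  assumes "length xs = length ys" "i < length xs"
  shows "\<bar>xs ! i - ys ! i\<bar> \<le> linf (vsub xs ys)"
  using linf_vsub_le_iff[OF assms(1), of "linf (vsub xs ys)"] assms(2) by simp

lemma linf_vsub_append_le:
  assumes "length xs = length xs'" "length ys = length ys'"
  shows "linf (vsub (xs @ ys) (xs' @ ys')) \<le> max (linf (vsub xs xs')) (linf (vsub ys ys'))"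
proof -
  have "\<bar>(xs @ ys) ! i - (xs' @ ys') ! i\<bar> \<le> max (linf (vsub xs xs')) (linf (vsub ys ys'))"
    if "i < length (xs @ ys)" for i
    using that assms abs_nth_diff_le_linf_vsub[OF assms(1), of i]
      abs_nth_diff_le_linf_vsub[OF assms(2), of "i - length xs"]
    by (auto simp: nth_append le_max_iff_disj)
  then show ?thesis
    using assms by (subst linf_vsub_le_iff) (auto simp: le_max_iff_disj linf_nonneg)
qed

definition linf_lipschitz :: "real \<Rightarrow> nat \<Rightarrow> (real list \<Rightarrow> real list) \<Rightarrow> bool" where
  "linf_lipschitz K n f \<longleftrightarrow> (\<forall>xs ys. length xs = n \<and> length ys = n \<longrightarrow>
     linf (vsub (f xs) (f ys)) \<le> K * linf (vsub xs ys))"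

lemma linf_lipschitzD:
  "linf_lipschitz K n f \<Longrightarrow> length xs = n \<Longrightarrow> length ys = n \<Longrightarrow>
     linf (vsub (f xs) (f ys)) \<le> K * linf (vsub xs ys)"
  unfolding linf_lipschitz_def by blast

lemma abs_sum_diff_le:
  assumes "\<forall>w\<in>S. \<bar>f w - g w\<bar> \<le> (B w :: real)"
  shows "\<bar>sum f S - sum g S\<bar> \<le> sum B S"
proof -
  have "\<bar>sum f S - sum g S\<bar> \<le> (\<Sum>w\<in>S. \<bar>f w - g w\<bar>)"
    unfolding sum_subtractf[symmetric] by (rule sum_abs)
  also have "\<dots> \<le> sum B S"
    using assms by (intro sum_mono) auto
  finally show ?thesis .
qed

lemma abs_mean_diff_le:
  assumes "finite S" "S \<noteq> {}" "\<forall>w\<in>S. \<bar>f w - g w\<bar> \<le> (d :: real)"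
  shows "\<bar>sum f S / card S - sum g S / card S\<bar> \<le> d"
proof -
  have card_pos: "real (card S) > 0"
    using assms by auto
  have "\<bar>sum f S / card S - sum g S / card S\<bar> = \<bar>sum f S - sum g S\<bar> / card S"
    by (simp add: diff_divide_distrib[symmetric])
  also have "\<dots> \<le> (card S * d) / card S"
    using abs_sum_diff_le[OF assms(3)] card_pos by (intro divide_right_mono) auto
  finally show ?thesis
    using card_pos by simp
qed

lemma abs_Max_diff_le:
  assumes "finite S" "S \<noteq> {}" "\<forall>w\<in>S. \<bar>f w - g w\<bar> \<le> (d :: real)"
  shows "\<bar>Max (f ` S) - Max (g ` S)\<bar> \<le> d"
proof -
  have Max_le: "Max (f ` S) \<le> Max (g ` S) + d" if fg: "\<forall>w\<in>S. f w \<le> g w + d" for f g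
  proof -
    have "f w \<le> Max (g ` S) + d" if "w \<in> S" for w
    proof -
      have "g w \<le> Max (g ` S)" "f w \<le> g w + d"
        using assms(1) fg that by simp_all
      then show ?thesis
        by linarith
    qed
    then show ?thesis
      using assms(1,2) by (simp add: Max_le_iff)
  qed
  have "\<forall>w\<in>S. f w \<le> g w + d" "\<forall>w\<in>S. g w \<le> f w + d"
    using assms(3) by (auto simp: abs_diff_le_iff)
  then show ?thesis
    using Max_le[of f g] Max_le[of g f] by linarith
qed

definition fnn_node_lipschitz :: "fnn \<Rightarrow> real \<Rightarrow> nat \<Rightarrow> bool" where
  "fnn_node_lipschitz N K v \<longleftrightarrow> (\<forall>x x' d. 0 \<le> d \<and> (\<forall>i<fnn_in N. \<bar>x i - x' i\<bar> \<le> d) \<longrightarrow>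
     \<bar>fnn_val N x v - fnn_val N x' v\<bar> \<le> K * d)"

lemma fnn_node_lipschitzD:
  "fnn_node_lipschitz N K v \<Longrightarrow> 0 \<le> d \<Longrightarrow> (\<And>i. i < fnn_in N \<Longrightarrow> \<bar>x i - x' i\<bar> \<le> d) \<Longrightarrow>
     \<bar>fnn_val N x v - fnn_val N x' v\<bar> \<le> K * d"
  unfolding fnn_node_lipschitz_def by blast

lemma fnn_node_lipschitz_mono:
  assumes "fnn_node_lipschitz N K v" "K \<le> K'"
  shows "fnn_node_lipschitz N K' v"
  unfolding fnn_node_lipschitz_def
proof (intro allI impI, elim conjE)
  fix x x' and d :: real
  assume "0 \<le> d" "\<forall>i<fnn_in N. \<bar>x i - x' i\<bar> \<le> d"
  then have "\<bar>fnn_val N x v - fnn_val N x' v\<bar> \<le> K * d"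
    using fnn_node_lipschitzD[OF assms(1)] by blast
  also have "\<dots> \<le> K' * d"
    using assms(2) \<open>0 \<le> d\<close> by (rule mult_right_mono)
  finally show "\<bar>fnn_val N x v - fnn_val N x' v\<bar> \<le> K' * d" .
qed

lemma fnn_node_lipschitz_input: "v < fnn_in N \<Longrightarrow> fnn_node_lipschitz N 1 v"
  unfolding fnn_node_lipschitz_def by (simp add: fnn_val.simps)

lemma fnn_node_lipschitz_hidden:
  assumes "\<not> v < fnn_in N" and C: "C-lipschitz_on UNIV (fnn_act N v)"
    and K: "\<And>u. u < v \<Longrightarrow> 0 \<le> K u \<and> fnn_node_lipschitz N (K u) u"
  shows "fnn_node_lipschitz N (C * (\<Sum>u<v. \<bar>fnn_wt N u v\<bar> * K u)) v"
  unfolding fnn_node_lipschitz_def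
proof (intro allI impI, elim conjE)
  fix x x' and d :: real
  assume d: "0 \<le> d" "\<forall>i<fnn_in N. \<bar>x i - x' i\<bar> \<le> d"
  define pre where "pre y = fnn_bias N v +
    (\<Sum>u<v. if fnn_edge N u v then fnn_wt N u v * fnn_val N y u else 0)" for y
  have "\<bar>(if fnn_edge N u v then fnn_wt N u v * fnn_val N x u else 0)
          - (if fnn_edge N u v then fnn_wt N u v * fnn_val N x' u else 0)\<bar>
        \<le> \<bar>fnn_wt N u v\<bar> * K u * d" if "u \<in> {..<v}" for u
  proof -
    have "\<bar>fnn_val N x u - fnn_val N x' u\<bar> \<le> K u * d"
      using K[of u] d that fnn_node_lipschitzD by simp
    then have "\<bar>fnn_wt N u v\<bar> * \<bar>fnn_val N x u - fnn_val N x' u\<bar> \<le> \<bar>fnn_wt N u v\<bar> * (K u * d)"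
      by (simp add: mult_left_mono)
    then show ?thesis
      using K[of u] that d(1) by (simp add: abs_mult right_diff_distrib[symmetric] mult.assoc)
  qed
  then have "\<bar>pre x - pre x'\<bar> \<le> (\<Sum>u<v. \<bar>fnn_wt N u v\<bar> * K u * d)"
    unfolding pre_def by (simp add: abs_sum_diff_le)
  also have "\<dots> = (\<Sum>u<v. \<bar>fnn_wt N u v\<bar> * K u) * d"
    by (simp add: sum_distrib_right)
  finally have "C * \<bar>pre x - pre x'\<bar> \<le> C * ((\<Sum>u<v. \<bar>fnn_wt N u v\<bar> * K u) * d)"
    using lipschitz_on_nonneg[OF C] by (rule mult_left_mono)
  moreover have "\<bar>fnn_val N x v - fnn_val N x' v\<bar> \<le> C * \<bar>pre x - pre x'\<bar>"
    using lipschitz_onD[OF C, of "pre x" "pre x'"] assms(1)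
    by (simp add: fnn_val.simps[of N _ v] pre_def dist_real_def)
  ultimately show "\<bar>fnn_val N x v - fnn_val N x' v\<bar> \<le> C * (\<Sum>u<v. \<bar>fnn_wt N u v\<bar> * K u) * d"
    by (simp add: mult.assoc)
qed

lemma fnn_node_lipschitz_exists:
  assumes wf: "wf_fnn N" and "v < fnn_nodes N"
  shows "\<exists>K\<ge>0. fnn_node_lipschitz N K v"
  using assms(2)
proof (induction v rule: less_induct)
  case (less v)
  show ?case
  proof (cases "v < fnn_in N")
    case True
    then show ?thesis
      using fnn_node_lipschitz_input by (intro exI[of _ 1]) simp
  next
    case False
    obtain C where C: "C-lipschitz_on UNIV (fnn_act N v)"
      using wf False less.prems unfolding wf_fnn_def by (meson not_less)
    have "\<forall>u\<in>{..<v}. \<exists>K. 0 \<le> K \<and> fnn_node_lipschitz N K u"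
      using less by auto
    then obtain K where "\<forall>u\<in>{..<v}. 0 \<le> K u \<and> fnn_node_lipschitz N (K u) u"
      by (metis bchoice)
    then have K: "\<And>u. u < v \<Longrightarrow> 0 \<le> K u \<and> fnn_node_lipschitz N (K u) u"
      by simp
    have "0 \<le> C * (\<Sum>u<v. \<bar>fnn_wt N u v\<bar> * K u)"
      using lipschitz_on_nonneg[OF C] K by (auto intro!: mult_nonneg_nonneg sum_nonneg)
    then show ?thesis
      using fnn_node_lipschitz_hidden[OF False C K] by blast
  qed
qed

lemma fnn_eval_lipschitz:
  assumes wf: "wf_fnn N"
  shows "\<exists>K\<ge>0. linf_lipschitz K (fnn_in N) (fnn_eval N)"
proof -
  have "\<forall>v\<in>set (fnn_outs N). \<exists>K. 0 \<le> K \<and> fnn_node_lipschitz N K v"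
    using fnn_node_lipschitz_exists[OF wf] wf unfolding wf_fnn_def by auto
  then obtain K where K: "\<And>v. v \<in> set (fnn_outs N) \<Longrightarrow> 0 \<le> K v \<and> fnn_node_lipschitz N (K v) v"
    by (metis bchoice)
  define Kmax where "Kmax = Max (insert 0 (K ` set (fnn_outs N)))"
  have out: "fnn_node_lipschitz N Kmax v" if "v \<in> set (fnn_outs N)" for v
  proof -
    have "K v \<le> Kmax"
      unfolding Kmax_def using that by simp
    then show ?thesis
      using K[OF that] fnn_node_lipschitz_mono by blast
  qed
  have "linf (vsub (fnn_eval N xs) (fnn_eval N ys)) \<le> Kmax * linf (vsub xs ys)"
    if lengths: "length xs = fnn_in N" "length ys = fnn_in N" for xs ys
  proof -
    have "\<bar>fnn_val N (nth xs) v - fnn_val N (nth ys) v\<bar> \<le> Kmax * linf (vsub xs ys)"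
      if "v \<in> set (fnn_outs N)" for v
      using fnn_node_lipschitzD[OF out[OF that] linf_nonneg] abs_nth_diff_le_linf_vsub lengths
      by simp
    moreover have "0 \<le> Kmax * linf (vsub xs ys)"
      unfolding Kmax_def by (simp add: linf_nonneg)
    ultimately show ?thesis
      unfolding fnn_eval_def by (subst linf_vsub_le_iff) (auto simp: in_set_conv_nth)
  qed
  moreover have "0 \<le> Kmax"
    unfolding Kmax_def by simp
  ultimately show ?thesis
    unfolding linf_lipschitz_def by blast
qed

lemma agg_apply_mset_set:
  assumes "finite S" "S \<noteq> {}"
  shows "agg_apply a r (image_mset f (mset_set S)) =
    map (\<lambda>i. case a of
                AggSum \<Rightarrow> \<Sum>w\<in>S. f w ! i
              | AggMean \<Rightarrow> (\<Sum>w\<in>S. f w ! i) / card S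
              | AggMax \<Rightarrow> Max ((\<lambda>w. f w ! i) ` S)) [0..<r]"
  using assms
  by (simp add: agg_apply_def mset_set_empty_iff multiset.map_comp comp_def sum_unfold_sum_mset
      split: agg_kind.split)

lemma linf_agg_apply_diff_le:
  assumes S: "finite S"
    and lengths: "\<forall>w\<in>S. length (f w) = r \<and> length (g w) = r"
    and close: "\<forall>w\<in>S. linf (vsub (f w) (g w)) \<le> d" and "0 \<le> (d :: real)"
  shows "linf (vsub (agg_apply a r (image_mset f (mset_set S))) (agg_apply a r (image_mset g (mset_set S))))
           \<le> real (max (card S) 1) * d"
proof (cases "S = {}")
  case True
  then show ?thesis
    using \<open>0 \<le> d\<close> by (simp add: agg_apply_def linf_vsub_le_iff)
next
  case False
  have coord_close: "\<forall>w\<in>S. \<bar>f w ! i - g w ! i\<bar> \<le> d" if "i < r" for i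
    using lengths close that abs_nth_diff_le_linf_vsub order_trans by metis
  have "card S * d \<le> max (card S) 1 * d" "d \<le> max (card S) 1 * d"
    using \<open>0 \<le> d\<close> mult_right_mono[of 1 "real (max (card S) 1)" d] by (auto intro: mult_right_mono)
  then show ?thesis
    unfolding agg_apply_mset_set[OF S False]
    using abs_sum_diff_le[OF coord_close] abs_mean_diff_le[OF S False coord_close]
      abs_Max_diff_le[OF S False coord_close] \<open>0 \<le> d\<close>
    by (subst linf_vsub_le_iff) (auto split: agg_kind.split intro: order_trans)
qed

lemma sig_dist_nonneg: "finite W \<Longrightarrow> 0 \<le> sig_dist W x x'"
  unfolding sig_dist_def by (intro Max_ge) auto

lemma linf_le_sig_dist: "finite W \<Longrightarrow> w \<in> W \<Longrightarrow> linf (vsub (x w) (x' w)) \<le> sig_dist W x x'"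
  unfolding sig_dist_def by (intro Max_ge) auto

lemma sig_dist_mono: "finite W \<Longrightarrow> U \<subseteq> W \<Longrightarrow> sig_dist U x x' \<le> sig_dist W x x'"
  unfolding sig_dist_def by (intro Max_mono) auto

lemma max_deg_1_le_card:
  assumes "finite V" "v \<in> V"
  shows "max (deg V E v) 1 \<le> card V"
proof -
  have "deg V E v \<le> card V"
    unfolding deg_def nbrs_def using assms(1) by (intro card_mono) auto
  moreover have "card V > 0"
    using assms card_gt_0_iff by blast
  ultimately show ?thesis
    by simp
qed

lemma finite_cnbrs: "finite V \<Longrightarrow> finite (cnbrs V E v)"
  unfolding cnbrs_def nbrs_def by simp

lemma signal_length: "signal V p x \<Longrightarrow> w \<in> V \<Longrightarrow> length (x w) = p"
  unfolding signal_def by blast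

definition layer_agg ::
  "gnn_layer \<Rightarrow> 'v set \<Rightarrow> ('v \<Rightarrow> 'v \<Rightarrow> bool) \<Rightarrow> ('v \<Rightarrow> real list) \<Rightarrow> 'v \<Rightarrow> real list" where
  "layer_agg L V E x v = agg_apply (gl_agg L) (gl_r L)
     (image_mset (\<lambda>w. fnn_eval (gl_msg L) (x v @ x w)) (mset_set (nbrs V E v)))"

lemma layer_apply_eq_layer_agg:
  "layer_apply L V E x v = fnn_eval (gl_comb L) (x v @ layer_agg L V E x v)"
  unfolding layer_apply_def layer_agg_def ..

lemma length_layer_agg: "length (layer_agg L V E x v) = gl_r L"
  unfolding layer_agg_def by (simp add: agg_apply_def)

lemma linf_layer_agg_diff_le:
  assumes msg: "linf_lipschitz K (2 * p) (fnn_eval (gl_msg L))" "0 \<le> K"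
    and V: "finite V" "v \<in> V" and signals: "signal V p x" "signal V p x'"
  shows "linf (vsub (layer_agg L V E x v) (layer_agg L V E x' v))
           \<le> max (deg V E v) 1 * (K * sig_dist (cnbrs V E v) x x')"
proof -
  define d where "d = sig_dist (cnbrs V E v) x x'"
  have "linf (vsub (fnn_eval (gl_msg L) (x v @ x w)) (fnn_eval (gl_msg L) (x' v @ x' w))) \<le> K * d"
    if w: "w \<in> nbrs V E v" for w
  proof -
    have "w \<in> V" "w \<in> cnbrs V E v" "v \<in> cnbrs V E v"
      using w unfolding cnbrs_def nbrs_def by auto
    then have lengths: "length (x v) = p" "length (x' v) = p" "length (x w) = p" "length (x' w) = p"
      using V(2) signals signal_length by metis+
    have "linf (vsub (fnn_eval (gl_msg L) (x v @ x w)) (fnn_eval (gl_msg L) (x' v @ x' w)))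
        \<le> K * linf (vsub (x v @ x w) (x' v @ x' w))"
      using lengths by (intro linf_lipschitzD[OF msg(1)]) auto
    also have "\<dots> \<le> K * d"
      using linf_vsub_append_le[of "x v" "x' v" "x w" "x' w"] lengths msg(2)
        linf_le_sig_dist[OF finite_cnbrs[OF V(1)] \<open>v \<in> cnbrs V E v\<close>, of x x']
        linf_le_sig_dist[OF finite_cnbrs[OF V(1)] \<open>w \<in> cnbrs V E v\<close>, of x x']
      unfolding d_def by (intro mult_left_mono) auto
    finally show ?thesis .
  qed
  moreover have "finite (nbrs V E v)"
    using V(1) unfolding nbrs_def by simp
  ultimately show ?thesis
    unfolding layer_agg_def deg_def d_def
    using msg(2) sig_dist_nonneg[OF finite_cnbrs[OF V(1)]]
    by (intro linf_agg_apply_diff_le) (auto simp: fnn_eval_def gl_r_def)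
qed

lemma linf_layer_apply_diff_le:
  assumes msg: "linf_lipschitz K\<^sub>1 (2 * p) (fnn_eval (gl_msg L))" "0 \<le> K\<^sub>1"
    and comb: "linf_lipschitz K\<^sub>2 (p + gl_r L) (fnn_eval (gl_comb L))" "0 \<le> K\<^sub>2"
    and V: "finite V" "v \<in> V" and signals: "signal V p x" "signal V p x'"
  shows "linf (vsub (layer_apply L V E x v) (layer_apply L V E x' v))
           \<le> K\<^sub>2 * max 1 K\<^sub>1 * sig_dist (cnbrs V E v) x x' * max (deg V E v) 1"
proof -
  define d where "d = sig_dist (cnbrs V E v) x x'"
  define m where "m = real (max (deg V E v) 1)"
  have "0 \<le> d" "1 \<le> m"
    unfolding d_def m_def using sig_dist_nonneg[OF finite_cnbrs[OF V(1)]] by auto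
  have "linf (vsub (x v) (x' v)) \<le> d"
    unfolding d_def using linf_le_sig_dist[OF finite_cnbrs[OF V(1)]] by (simp add: cnbrs_def)
  also have "d \<le> m * max 1 K\<^sub>1 * d"
    using \<open>0 \<le> d\<close> \<open>1 \<le> m\<close> mult_right_mono[of 1 "m * max 1 K\<^sub>1" d] mult_mono[of 1 m 1 "max 1 K\<^sub>1"]
    by simp
  finally have self: "linf (vsub (x v) (x' v)) \<le> m * max 1 K\<^sub>1 * d" .
  have "linf (vsub (layer_agg L V E x v) (layer_agg L V E x' v)) \<le> m * (K\<^sub>1 * d)"
    unfolding d_def m_def using linf_layer_agg_diff_le[OF msg V signals] .
  also have "\<dots> \<le> m * max 1 K\<^sub>1 * d"
    using \<open>0 \<le> d\<close> \<open>1 \<le> m\<close> by (simp add: mult.assoc mult_left_mono mult_right_mono)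
  finally have "linf (vsub (x v @ layer_agg L V E x v) (x' v @ layer_agg L V E x' v)) \<le> m * max 1 K\<^sub>1 * d"
    using self linf_vsub_append_le[of "x v" "x' v" "layer_agg L V E x v" "layer_agg L V E x' v"]
      signal_length[OF signals(1) V(2)] signal_length[OF signals(2) V(2)]
    by (simp add: length_layer_agg)
  moreover have "linf (vsub (layer_apply L V E x v) (layer_apply L V E x' v))
      \<le> K\<^sub>2 * linf (vsub (x v @ layer_agg L V E x v) (x' v @ layer_agg L V E x' v))"
    unfolding layer_apply_eq_layer_agg
    using signal_length[OF signals(1) V(2)] signal_length[OF signals(2) V(2)]
    by (intro linf_lipschitzD[OF comb(1)]) (simp_all add: length_layer_agg)
  ultimately have "linf (vsub (layer_apply L V E x v) (layer_apply L V E x' v)) \<le> K\<^sub>2 * (m * max 1 K\<^sub>1 * d)"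
    using comb(2) by (meson mult_left_mono order_trans)
  then show ?thesis
    unfolding d_def m_def by (simp add: algebra_simps)
qed

theorem lemma4p3:
  fixes p :: nat and L :: gnn_layer
  assumes "gnn_layer_wf p L"
  shows "\<exists>lam::nat. lam > 0 \<and>
    (\<forall>(V :: nat set) E x x' v.
       graph V E \<and> signal V p x \<and> signal V p x' \<and> v \<in> V \<longrightarrow>
         linf (vsub (layer_apply L V E x v) (layer_apply L V E x' v))
           \<le> real lam * sig_dist (cnbrs V E v) x x' * real (max (deg V E v) 1) \<and>
         real lam * sig_dist (cnbrs V E v) x x' * real (max (deg V E v) 1)
           \<le> real lam * sig_dist V x x' * real (card V))"
proof -
  obtain K\<^sub>1 where msg: "linf_lipschitz K\<^sub>1 (2 * p) (fnn_eval (gl_msg L))" "0 \<le> K\<^sub>1"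
    using assms fnn_eval_lipschitz unfolding gnn_layer_wf_def by force
  obtain K\<^sub>2 where comb: "linf_lipschitz K\<^sub>2 (p + gl_r L) (fnn_eval (gl_comb L))" "0 \<le> K\<^sub>2"
    using assms fnn_eval_lipschitz unfolding gnn_layer_wf_def by force
  define lam where "lam = nat \<lceil>K\<^sub>2 * max 1 K\<^sub>1\<rceil> + 1"
  have "K\<^sub>2 * max 1 K\<^sub>1 \<le> real lam"
    unfolding lam_def by linarith
  show ?thesis
  proof (intro exI[of _ lam] conjI allI impI)
    fix V :: "nat set" and E x x' v
    assume "graph V E \<and> signal V p x \<and> signal V p x' \<and> v \<in> V"
    then have V: "finite V" "v \<in> V" and signals: "signal V p x" "signal V p x'"
      unfolding graph_def by auto
    have "cnbrs V E v \<subseteq> V"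
      using V(2) unfolding cnbrs_def nbrs_def by auto
    then have d: "0 \<le> sig_dist (cnbrs V E v) x x'" "sig_dist (cnbrs V E v) x x' \<le> sig_dist V x x'"
      using sig_dist_nonneg[OF finite_cnbrs[OF V(1)]] sig_dist_mono[OF V(1)] by auto
    have "linf (vsub (layer_apply L V E x v) (layer_apply L V E x' v))
           \<le> K\<^sub>2 * max 1 K\<^sub>1 * sig_dist (cnbrs V E v) x x' * max (deg V E v) 1"
      using linf_layer_apply_diff_le[OF msg comb V signals] .
    also have "\<dots> \<le> real lam * sig_dist (cnbrs V E v) x x' * max (deg V E v) 1"
      using \<open>K\<^sub>2 * max 1 K\<^sub>1 \<le> real lam\<close> d(1) by (intro mult_right_mono) auto
    finally show "linf (vsub (layer_apply L V E x v) (layer_apply L V E x' v))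
           \<le> real lam * sig_dist (cnbrs V E v) x x' * real (max (deg V E v) 1)" .
    show "real lam * sig_dist (cnbrs V E v) x x' * real (max (deg V E v) 1)
           \<le> real lam * sig_dist V x x' * real (card V)"
      using d max_deg_1_le_card[OF V, of E] by (intro mult_mono mult_left_mono) auto
  qed (simp add: lam_def)
qed

end
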